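(* Let $H$ be a fixed infinite-dimensional separable Hilbert space and let $J$ be a homogeneous two-sided ideal in $\mathbb{C}\langle x_1,\dots,x_d\rangle$, $d<\infty$. Then $I(Z(J))=J$. In particular $Z(J)=\{(0,\dots,0)\}$ if and only if $J$ is the ideal generated by $x_1,\dots,x_d$.
   Context: $\mathbb{C}\langle x_1,\dots,x_d\rangle$ is the algebra of polynomials in noncommuting variables; a homogeneous ideal is a two-sided ideal generated by homogeneous polynomials. For $p=\sum_\alpha c_\alpha x^\alpha$ and $\underline T=(T_1,\dots,T_d)\in B(H)^d$, $p(\underline T)=\sum_\alpha c_\alpha T^\alpha$ with $T^{\alpha_1\cdots\alpha_k}=T_{\alpha_1}\cdots T_{\alpha_k}$ and $T^{\emptyset}=I_H$. $Z(J)=\{\underline T\in B(H)^d: p(\underline T)=0\ \forall p\in J\}$ and, for $Z\subseteq B(H)^d$, $I(Z)=\{p: p(\underline T)=0\ \forall\underline T\in Z\}$. *)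

theory Defs
  imports Complex_Main
begin

text \<open>A noncommutative polynomial is a finitely supported coefficient function on words;
  the word [a1,...,ak] (letters indexed from 0) stands for the monomial x_{a1+1}...x_{ak+1}.\<close>

definition nc_poly :: "nat \<Rightarrow> (nat list \<Rightarrow> complex) set" where
  "nc_poly d = {p. finite {w. p w \<noteq> 0} \<and> (\<forall>w. p w \<noteq> 0 \<longrightarrow> set w \<subseteq> {..<d})}"

definition nc_mult :: "(nat list \<Rightarrow> complex) \<Rightarrow> (nat list \<Rightarrow> complex) \<Rightarrow> (nat list \<Rightarrow> complex)" where
  "nc_mult p q = (\<lambda>w. \<Sum>i\<le>length w. p (take i w) * q (drop i w))"

definition nc_var :: "nat \<Rightarrow> (nat list \<Rightarrow> complex)" where
  "nc_var i = (\<lambda>w. if w = [i] then 1 else 0)"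

definition nc_homogeneous :: "(nat list \<Rightarrow> complex) \<Rightarrow> bool" where
  "nc_homogeneous p \<longleftrightarrow> (\<exists>k. \<forall>w. p w \<noteq> 0 \<longrightarrow> length w = k)"

definition nc_ideal :: "nat \<Rightarrow> (nat list \<Rightarrow> complex) set \<Rightarrow> bool" where
  "nc_ideal d J \<longleftrightarrow> J \<subseteq> nc_poly d \<and> (\<lambda>w. 0) \<in> J \<and> (\<forall>p\<in>J. \<forall>q\<in>J. (\<lambda>w. p w + q w) \<in> J)
     \<and> (\<forall>p\<in>J. \<forall>a\<in>nc_poly d. \<forall>b\<in>nc_poly d. nc_mult a (nc_mult p b) \<in> J)"

definition nc_gen_ideal :: "nat \<Rightarrow> (nat list \<Rightarrow> complex) set \<Rightarrow> (nat list \<Rightarrow> complex) set" where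
  "nc_gen_ideal d S = \<Inter>{J. nc_ideal d J \<and> S \<subseteq> J}"

definition nc_hom_ideal :: "nat \<Rightarrow> (nat list \<Rightarrow> complex) set \<Rightarrow> bool" where
  "nc_hom_ideal d J \<longleftrightarrow> nc_ideal d J \<and>
     (\<exists>S \<subseteq> nc_poly d. (\<forall>s\<in>S. nc_homogeneous s) \<and> J = nc_gen_ideal d S)"

definition l2 :: "(nat \<Rightarrow> complex) set" where
  "l2 = {x. summable (\<lambda>n. (cmod (x n))\<^sup>2)}"

definition l2norm :: "(nat \<Rightarrow> complex) \<Rightarrow> real" where
  "l2norm x = sqrt (\<Sum>n. (cmod (x n))\<^sup>2)"

text \<open>Bounded operators on l^2, normalised to be 0 outside l^2 so that equality is genuine.\<close>
definition bop :: "((nat \<Rightarrow> complex) \<Rightarrow> (nat \<Rightarrow> complex)) set" where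
  "bop = {T. (\<forall>x\<in>l2. T x \<in> l2)
            \<and> (\<forall>x\<in>l2. \<forall>y\<in>l2. T (\<lambda>n. x n + y n) = (\<lambda>n. T x n + T y n))
            \<and> (\<forall>x\<in>l2. \<forall>c. T (\<lambda>n. c * x n) = (\<lambda>n. c * T x n))
            \<and> (\<exists>C. \<forall>x\<in>l2. l2norm (T x) \<le> C * l2norm x)
            \<and> (\<forall>x. x \<notin> l2 \<longrightarrow> T x = (\<lambda>n. 0))}"

definition idH :: "(nat \<Rightarrow> complex) \<Rightarrow> (nat \<Rightarrow> complex)" where
  "idH = (\<lambda>x. if x \<in> l2 then x else (\<lambda>n. 0))"

definition zeroH :: "(nat \<Rightarrow> complex) \<Rightarrow> (nat \<Rightarrow> complex)" where
  "zeroH = (\<lambda>x n. 0)"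

fun opword :: "((nat \<Rightarrow> complex) \<Rightarrow> (nat \<Rightarrow> complex)) list \<Rightarrow> nat list
                 \<Rightarrow> (nat \<Rightarrow> complex) \<Rightarrow> (nat \<Rightarrow> complex)" where
  "opword T [] = idH"
| "opword T (a # w) = (T ! a) \<circ> opword T w"

definition nc_eval :: "(nat list \<Rightarrow> complex) \<Rightarrow> ((nat \<Rightarrow> complex) \<Rightarrow> (nat \<Rightarrow> complex)) list
                          \<Rightarrow> (nat \<Rightarrow> complex) \<Rightarrow> (nat \<Rightarrow> complex)" where
  "nc_eval p T = (\<lambda>x n. \<Sum>w\<in>{w. p w \<noteq> 0}. p w * opword T w x n)"

definition Zset :: "nat \<Rightarrow> (nat list \<Rightarrow> complex) set
                      \<Rightarrow> ((nat \<Rightarrow> complex) \<Rightarrow> (nat \<Rightarrow> complex)) list set" where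
  "Zset d J = {T. length T = d \<and> set T \<subseteq> bop \<and> (\<forall>p\<in>J. nc_eval p T = zeroH)}"

definition Iset :: "nat \<Rightarrow> ((nat \<Rightarrow> complex) \<Rightarrow> (nat \<Rightarrow> complex)) list set
                      \<Rightarrow> (nat list \<Rightarrow> complex) set" where
  "Iset d Z = {p \<in> nc_poly d. \<forall>T\<in>Z. nc_eval p T = zeroH}"

end

theory Submission
  imports Defs "HOL-Library.Function_Algebras" "HOL-Library.Countable"
begin

text \<open>
  The inclusion J \<subseteq> I(Z(J)) is trivial.  For the converse let p \<notin> J have degree \<le> k.
  Polynomials are paired with functionals g on words by <q, g> = \<Sum>u q(u) g(u).
  Because J is homogeneous it is graded, so the part of J of degree \<le> k lies in J and misses p;
  linear algebra then gives a functional f0, supported on words of length \<le> k, which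
  annihilates J and has <p, f0> = 1.  The space V of all such annihilating functionals is
  invariant under the right shifts g \<mapsto> (w \<mapsto> g (w @ u)).  Coding the finitely many short
  words by natural numbers, V becomes a finite-dimensional subspace of l^2, and the tuple
  T_a = "project onto V, then shift by the letter a" consists of finite-rank operators.
  For q \<in> J and g \<in> V the coordinate w of q(T) g is <x^w q, g> = 0, so T \<in> Z(J),
  whereas the coordinate [] of p(T) f0 is <p, f0> = 1, so p \<notin> I(Z(J)).
\<close>

definition nc_const :: "complex \<Rightarrow> nat list \<Rightarrow> complex" where
  "nc_const c = (\<lambda>w. if w = [] then c else 0)"

definition nc_monom :: "nat list \<Rightarrow> nat list \<Rightarrow> complex" where
  "nc_monom u = (\<lambda>w. if w = u then 1 else 0)"

definition hcomp :: "nat \<Rightarrow> (nat list \<Rightarrow> complex) \<Rightarrow> nat list \<Rightarrow> complex" where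
  "hcomp k p = (\<lambda>w. if length w = k then p w else 0)"

lemma nc_mult_const_left: "nc_mult (nc_const c) r = (\<lambda>w. c * r w)"
proof
  fix w show "nc_mult (nc_const c) r w = c * r w"
  proof (cases w)
    case Nil then show ?thesis by (simp add: nc_mult_def nc_const_def)
  next
    case (Cons a v)
    then show ?thesis
      unfolding nc_mult_def nc_const_def by (simp add: sum.atMost_Suc_shift del: sum.atMost_Suc)
  qed
qed

lemma nc_mult_const_right: "nc_mult r (nc_const c) = (\<lambda>w. r w * c)"
proof
  fix w
  have "nc_mult r (nc_const c) w = (\<Sum>i<length w. r (take i w) * nc_const c (drop i w)) + r w * c"
    unfolding nc_mult_def lessThan_Suc_atMost[symmetric] by (simp add: nc_const_def)
  also have "(\<Sum>i<length w. r (take i w) * nc_const c (drop i w)) = 0"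
    by (intro sum.neutral) (auto simp: nc_const_def)
  finally show "nc_mult r (nc_const c) w = r w * c" by simp
qed

lemma nc_mult_monom_left:
  "nc_mult (nc_monom u) r w =
     (if length u \<le> length w \<and> take (length u) w = u then r (drop (length u) w) else 0)"
proof -
  have "nc_mult (nc_monom u) r w = (\<Sum>i\<le>length w.
      if i = length u \<and> take (length u) w = u then r (drop (length u) w) else 0)"
    unfolding nc_mult_def nc_monom_def by (intro sum.cong) auto
  then show ?thesis by (cases "take (length u) w = u") (auto simp: sum.delta)
qed

lemma nc_mult_monom_right:
  "nc_mult r (nc_monom u) w =
     (if length u \<le> length w \<and> drop (length w - length u) w = u
      then r (take (length w - length u) w) else 0)"
proof -
  have "nc_mult r (nc_monom u) w = (\<Sum>i\<le>length w. if i = length w - length u \<and> length u \<le> length w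
      \<and> drop (length w - length u) w = u then r (take (length w - length u) w) else 0)"
    unfolding nc_mult_def nc_monom_def by (intro sum.cong) auto
  then show ?thesis
    by (cases "length u \<le> length w \<and> drop (length w - length u) w = u") (auto simp: sum.delta)
qed

lemma nc_mult_nil: "nc_mult a b [] = a [] * b []"
  unfolding nc_mult_def by simp

lemma nc_mult_nonzero:
  assumes "nc_mult a b w \<noteq> 0"
  shows "\<exists>i\<le>length w. a (take i w) \<noteq> 0 \<and> b (drop i w) \<noteq> 0"
proof -
  from assms obtain i where "i \<in> {..length w}" "a (take i w) * b (drop i w) \<noteq> 0"
    unfolding nc_mult_def using sum.not_neutral_contains_not_neutral by blast
  then show ?thesis by auto
qed

lemma nc_mult_sum_right: "nc_mult a (\<lambda>w. \<Sum>j\<in>A. f j w) = (\<lambda>w. \<Sum>j\<in>A. nc_mult a (f j) w)"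
  unfolding nc_mult_def by (simp add: sum_distrib_left sum.swap[of _ A])

lemma hcomp_mult: "hcomp k (nc_mult a r) = (\<lambda>w. \<Sum>i\<le>k. nc_mult (hcomp i a) (hcomp (k-i) r) w)"
proof
  fix w :: "nat list"
  let ?n = "length w"
  let ?t = "\<lambda>m. a (take m w) * r (drop m w)"
  have "(\<Sum>i\<le>k. nc_mult (hcomp i a) (hcomp (k-i) r) w) =
        (\<Sum>i\<le>k. \<Sum>m\<le>?n. if i = m then (if ?n - m = k - i then ?t m else 0) else 0)"
    unfolding nc_mult_def hcomp_def by (intro sum.cong refl) (auto simp: min_def)
  also have "\<dots> = (\<Sum>m\<le>?n. \<Sum>i\<le>k. if i = m then (if ?n - m = k - i then ?t m else 0) else 0)"
    by (rule sum.swap)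
  also have "\<dots> = (\<Sum>m\<le>?n. if m \<le> k then (if ?n - m = k - m then ?t m else 0) else 0)"
    by (intro sum.cong refl) (simp add: sum.delta')
  also have "\<dots> = hcomp k (nc_mult a r) w"
  proof (cases "?n = k")
    case True
    then show ?thesis unfolding hcomp_def nc_mult_def by (auto intro!: sum.cong)
  next
    case False
    have "(if m \<le> k then (if ?n - m = k - m then ?t m else 0) else 0) = 0" if "m \<in> {..?n}" for m
      using False that by auto
    then show ?thesis using False unfolding hcomp_def by (simp add: sum.neutral)
  qed
  finally show "hcomp k (nc_mult a r) w = (\<Sum>i\<le>k. nc_mult (hcomp i a) (hcomp (k-i) r) w)" ..
qed

lemma hcomp_mult3:
  "hcomp k (nc_mult a (nc_mult p b)) = (\<lambda>w. \<Sum>i\<le>k. \<Sum>j\<le>k-i.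
     nc_mult (hcomp i a) (nc_mult (hcomp j p) (hcomp (k-i-j) b)) w)"
  by (simp add: hcomp_mult[of _ a] hcomp_mult[of _ p b] nc_mult_sum_right diff_diff_add)

lemma hcomp_homogeneous:
  assumes "nc_homogeneous s"
  shows "hcomp k s = s \<or> hcomp k s = (\<lambda>w. 0)"
proof -
  from assms obtain m where m: "\<And>w. s w \<noteq> 0 \<Longrightarrow> length w = m"
    unfolding nc_homogeneous_def by blast
  show ?thesis
    using m unfolding hcomp_def by (cases "k = m") (auto simp: fun_eq_iff)
qed

lemma nc_polyI:
  "finite {w. q w \<noteq> 0} \<Longrightarrow> (\<And>w. q w \<noteq> 0 \<Longrightarrow> set w \<subseteq> {..<d}) \<Longrightarrow> q \<in> nc_poly d"
  unfolding nc_poly_def by blast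

lemma nc_poly_subsupport:
  assumes p: "p \<in> nc_poly d" and q: "\<And>w. q w \<noteq> 0 \<Longrightarrow> p w \<noteq> 0"
  shows "q \<in> nc_poly d"
proof (rule nc_polyI)
  show "finite {w. q w \<noteq> 0}"
    using p q unfolding nc_poly_def by (metis (mono_tags, lifting) finite_subset mem_Collect_eq subsetI)
  show "set w \<subseteq> {..<d}" if "q w \<noteq> 0" for w
    using p q that unfolding nc_poly_def by blast
qed

lemma nc_poly_zero: "(\<lambda>w. 0) \<in> nc_poly d"
  unfolding nc_poly_def by auto

lemma nc_poly_add: "p \<in> nc_poly d \<Longrightarrow> q \<in> nc_poly d \<Longrightarrow> (\<lambda>w. p w + q w) \<in> nc_poly d"
proof (rule nc_polyI)
  assume pq: "p \<in> nc_poly d" "q \<in> nc_poly d"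
  have "{w. p w + q w \<noteq> 0} \<subseteq> {w. p w \<noteq> 0} \<union> {w. q w \<noteq> 0}" by auto
  moreover have "finite ({w. p w \<noteq> 0} \<union> {w. q w \<noteq> 0})"
    using pq unfolding nc_poly_def by auto
  ultimately show "finite {w. p w + q w \<noteq> 0}" by (rule finite_subset)
  show "set w \<subseteq> {..<d}" if "p w + q w \<noteq> 0" for w
  proof -
    have "p w \<noteq> 0 \<or> q w \<noteq> 0" using that by auto
    then show ?thesis using pq unfolding nc_poly_def by blast
  qed
qed

lemma nc_poly_mult:
  assumes "a \<in> nc_poly d" "b \<in> nc_poly d"
  shows "nc_mult a b \<in> nc_poly d"
proof (rule nc_polyI)
  have "{w. nc_mult a b w \<noteq> 0} \<subseteq> (\<lambda>(x,y). x @ y) ` ({w. a w \<noteq> 0} \<times> {w. b w \<noteq> 0})"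
  proof
    fix w assume "w \<in> {w. nc_mult a b w \<noteq> 0}"
    then obtain i where "a (take i w) \<noteq> 0" "b (drop i w) \<noteq> 0"
      using nc_mult_nonzero by blast
    then show "w \<in> (\<lambda>(x,y). x @ y) ` ({w. a w \<noteq> 0} \<times> {w. b w \<noteq> 0})"
      by (intro image_eqI[of _ _ "(take i w, drop i w)"]) auto
  qed
  then show "finite {w. nc_mult a b w \<noteq> 0}"
    using assms unfolding nc_poly_def by (auto intro: finite_subset)
  show "set w \<subseteq> {..<d}" if nz: "nc_mult a b w \<noteq> 0" for w
  proof -
    obtain i where "a (take i w) \<noteq> 0" "b (drop i w) \<noteq> 0"
      using nc_mult_nonzero[OF nz] by blast
    then have "set (take i w) \<subseteq> {..<d}" "set (drop i w) \<subseteq> {..<d}"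
      using assms unfolding nc_poly_def by auto
    then show ?thesis by (metis append_take_drop_id le_sup_iff set_append)
  qed
qed

lemma nc_poly_const: "nc_const c \<in> nc_poly d"
  by (rule nc_polyI[OF finite_subset[of _ "{[]}"]]) (auto simp: nc_const_def split: if_splits)

lemma nc_poly_monom: "set u \<subseteq> {..<d} \<Longrightarrow> nc_monom u \<in> nc_poly d"
  by (rule nc_polyI[OF finite_subset[of _ "{u}"]]) (auto simp: nc_monom_def split: if_splits)

lemma nc_poly_hcomp: "p \<in> nc_poly d \<Longrightarrow> hcomp k p \<in> nc_poly d"
  by (erule nc_poly_subsupport) (simp add: hcomp_def split: if_splits)

lemma nc_poly_support:
  assumes "q \<in> nc_poly d"
  shows "finite {u. q u \<noteq> 0}" "\<And>u. q u \<noteq> 0 \<Longrightarrow> set u \<subseteq> {..<d}"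
  using assms unfolding nc_poly_def by auto

lemma nc_idealI:
  assumes "J \<subseteq> nc_poly d" "(\<lambda>w. 0) \<in> J"
    "\<And>p q. p \<in> J \<Longrightarrow> q \<in> J \<Longrightarrow> (\<lambda>w. p w + q w) \<in> J"
    "\<And>p a b. p \<in> J \<Longrightarrow> a \<in> nc_poly d \<Longrightarrow> b \<in> nc_poly d \<Longrightarrow> nc_mult a (nc_mult p b) \<in> J"
  shows "nc_ideal d J"
  using assms unfolding nc_ideal_def by blast

lemma nc_gen_ideal_props:
  assumes "S \<subseteq> nc_poly d"
  shows "nc_ideal d (nc_gen_ideal d S)" "S \<subseteq> nc_gen_ideal d S"
proof -
  show "S \<subseteq> nc_gen_ideal d S" unfolding nc_gen_ideal_def by auto
  have "nc_ideal d (nc_poly d)"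
    unfolding nc_ideal_def by (simp add: nc_poly_zero nc_poly_add nc_poly_mult)
  then have "nc_poly d \<in> {J. nc_ideal d J \<and> S \<subseteq> J}" using assms by auto
  then show "nc_ideal d (nc_gen_ideal d S)"
    by (intro nc_idealI) (auto simp: nc_ideal_def nc_gen_ideal_def)
qed

lemma nc_gen_ideal_least: "nc_ideal d I \<Longrightarrow> S \<subseteq> I \<Longrightarrow> nc_gen_ideal d S \<subseteq> I"
  unfolding nc_gen_ideal_def by auto

context
  fixes d J assumes J: "nc_ideal d J"
begin

lemma ideal_poly: "q \<in> J \<Longrightarrow> q \<in> nc_poly d"
  using J unfolding nc_ideal_def by auto

lemma ideal_zero: "(\<lambda>w. 0) \<in> J"
  using J unfolding nc_ideal_def by auto

lemma ideal_add: "p \<in> J \<Longrightarrow> q \<in> J \<Longrightarrow> (\<lambda>w. p w + q w) \<in> J"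
  using J unfolding nc_ideal_def by auto

lemma ideal_mult: "p \<in> J \<Longrightarrow> a \<in> nc_poly d \<Longrightarrow> b \<in> nc_poly d \<Longrightarrow> nc_mult a (nc_mult p b) \<in> J"
  using J unfolding nc_ideal_def by auto

lemma ideal_scale: "p \<in> J \<Longrightarrow> (\<lambda>w. c * p w) \<in> J"
  using ideal_mult[of p "nc_const c" "nc_const 1"] nc_poly_const
  by (simp add: nc_mult_const_left nc_mult_const_right)

lemma ideal_monom_left: "p \<in> J \<Longrightarrow> set u \<subseteq> {..<d} \<Longrightarrow> nc_mult (nc_monom u) p \<in> J"
  using ideal_mult[of p "nc_monom u" "nc_const 1"] nc_poly_const nc_poly_monom
  by (simp add: nc_mult_const_right)

lemma ideal_monom_right: "p \<in> J \<Longrightarrow> set u \<subseteq> {..<d} \<Longrightarrow> nc_mult p (nc_monom u) \<in> J"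
  using ideal_mult[of p "nc_const 1" "nc_monom u"] nc_poly_const nc_poly_monom
  by (simp add: nc_mult_const_left)

lemma ideal_sum: "finite A \<Longrightarrow> (\<And>i. i \<in> A \<Longrightarrow> f i \<in> J) \<Longrightarrow> (\<lambda>w. \<Sum>i\<in>A. f i w) \<in> J"
proof (induction A rule: finite_induct)
  case empty then show ?case using ideal_zero by simp
next
  case (insert x F)
  then show ?case using ideal_add[of "f x" "\<lambda>w. \<Sum>i\<in>F. f i w"] by simp
qed

text \<open>An ideal containing a nonzero constant contains every polynomial.  Hence if a proper
  ideal contains the degree-0 component of q, then q has no constant term.\<close>
lemma proper_ideal_const_free:
  assumes p: "p \<in> nc_poly d" "p \<notin> J" and q0: "hcomp 0 q \<in> J"
  shows "q [] = 0"
proof (rule ccontr)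
  assume nz: "q [] \<noteq> 0"
  have "hcomp 0 q = nc_const (q [])" unfolding hcomp_def nc_const_def by auto
  then have "(\<lambda>w. 1 / q [] * nc_const (q []) w) \<in> J" using ideal_scale q0 by metis
  moreover have "(\<lambda>w. 1 / q [] * nc_const (q []) w) = nc_const 1"
    using nz by (auto simp: nc_const_def fun_eq_iff)
  ultimately have "nc_mult p (nc_mult (nc_const 1) (nc_const 1)) \<in> J"
    using ideal_mult p(1) nc_poly_const by simp
  then show False using p by (simp add: nc_mult_const_left nc_mult_const_right)
qed

end

section \<open>Homogeneous ideals are graded\<close>

text \<open>The elements all of whose homogeneous components lie in J form an ideal; it contains
  every homogeneous generator, hence all of J when J is homogeneous.\<close>
lemma hom_ideal_graded:
  assumes H: "nc_hom_ideal d J" and q: "q \<in> J"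
  shows "hcomp k q \<in> J"
proof -
  have J: "nc_ideal d J" using H unfolding nc_hom_ideal_def by blast
  from H obtain S where S: "S \<subseteq> nc_poly d" "\<forall>s\<in>S. nc_homogeneous s" "J = nc_gen_ideal d S"
    unfolding nc_hom_ideal_def by blast
  define G where "G = {q \<in> nc_poly d. \<forall>k. hcomp k q \<in> J}"
  have "nc_ideal d G"
  proof (rule nc_idealI)
    show "G \<subseteq> nc_poly d" unfolding G_def by blast
    show "(\<lambda>w. 0) \<in> G" unfolding G_def hcomp_def using nc_poly_zero ideal_zero[OF J] by simp
    show "(\<lambda>w. p w + q w) \<in> G" if "p \<in> G" "q \<in> G" for p q
    proof -
      have "hcomp k (\<lambda>w. p w + q w) = (\<lambda>w. hcomp k p w + hcomp k q w)" for k
        unfolding hcomp_def by auto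
      then show ?thesis using that ideal_add[OF J] nc_poly_add unfolding G_def by auto
    qed
    show "nc_mult a (nc_mult p b) \<in> G"
      if p: "p \<in> G" and a: "a \<in> nc_poly d" and b: "b \<in> nc_poly d" for p a b
    proof -
      note hcomp_mult3[of _ a p b]
      moreover have "(\<lambda>w. \<Sum>i\<le>k. \<Sum>j\<le>k-i.
          nc_mult (hcomp i a) (nc_mult (hcomp j p) (hcomp (k-i-j) b)) w) \<in> J" for k
        using p a b nc_poly_hcomp unfolding G_def
        by (intro ideal_sum[OF J] finite_atMost) (auto intro!: ideal_mult[OF J] ideal_sum[OF J])
      ultimately show ?thesis using p a b unfolding G_def by (auto intro: nc_poly_mult)
    qed
  qed
  moreover have "S \<subseteq> G"
  proof
    fix s assume "s \<in> S"
    then have "s \<in> J" "s \<in> nc_poly d" "nc_homogeneous s"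
      using S nc_gen_ideal_props(2)[OF S(1)] by auto
    moreover have "hcomp k s \<in> J" for k
      using hcomp_homogeneous[OF \<open>nc_homogeneous s\<close>, of k] \<open>s \<in> J\<close> ideal_zero[OF J] by auto
    ultimately show "s \<in> G" unfolding G_def by blast
  qed
  ultimately have "J \<subseteq> G" using S(3) nc_gen_ideal_least by blast
  then show ?thesis using q unfolding G_def by blast
qed

definition nc_trunc :: "nat \<Rightarrow> (nat list \<Rightarrow> complex) \<Rightarrow> nat list \<Rightarrow> complex" where
  "nc_trunc k p = (\<lambda>w. if length w \<le> k then p w else 0)"

lemma hom_ideal_trunc:
  assumes H: "nc_hom_ideal d J" and q: "q \<in> J"
  shows "nc_trunc k q \<in> J"
proof -
  have "nc_trunc k q = (\<lambda>w. \<Sum>j\<le>k. hcomp j q w)"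
    unfolding nc_trunc_def hcomp_def by (auto simp: fun_eq_iff sum.delta')
  moreover have "nc_ideal d J" using H unfolding nc_hom_ideal_def by blast
  ultimately show ?thesis
    by (simp add: ideal_sum hom_ideal_graded[OF H q])
qed

section \<open>Pairing polynomials with functionals on words\<close>

definition nc_pair :: "(nat list \<Rightarrow> complex) \<Rightarrow> (nat list \<Rightarrow> complex) \<Rightarrow> complex" where
  "nc_pair q g = (\<Sum>u\<in>{u. q u \<noteq> 0}. q u * g u)"

text \<open>Shifting a functional by a word on the left or on the right; these are the adjoints
  of multiplication by a monomial.\<close>
definition lshift :: "nat list \<Rightarrow> (nat list \<Rightarrow> complex) \<Rightarrow> nat list \<Rightarrow> complex" where
  "lshift v g = (\<lambda>u. g (v @ u))"

definition rshift :: "nat list \<Rightarrow> (nat list \<Rightarrow> complex) \<Rightarrow> nat list \<Rightarrow> complex" where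
  "rshift v g = (\<lambda>u. g (u @ v))"

lemma rshift_rshift: "rshift [a] (rshift u g) = rshift (a # u) g"
  unfolding rshift_def by simp

lemma nc_pair_zero: "nc_pair q (\<lambda>w. 0) = 0"
  unfolding nc_pair_def by simp

lemma nc_pair_add: "nc_pair q (\<lambda>w. x w + y w) = nc_pair q x + nc_pair q y"
  unfolding nc_pair_def by (simp add: distrib_left sum.distrib)

lemma nc_pair_scale: "nc_pair q (\<lambda>w. c * x w) = c * nc_pair q x"
  unfolding nc_pair_def by (simp add: sum_distrib_left algebra_simps)

lemma nc_pair_eq_sum:
  assumes "finite {u. q u \<noteq> 0}" "finite W" "\<And>u. u \<notin> W \<Longrightarrow> g u = 0"
  shows "nc_pair q g = (\<Sum>u\<in>W. q u * g u)"
proof -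
  have "nc_pair q g = (\<Sum>u\<in>{u. q u \<noteq> 0} \<union> W. q u * g u)"
    unfolding nc_pair_def using assms by (intro sum.mono_neutral_left) auto
  also have "\<dots> = (\<Sum>u\<in>W. q u * g u)"
    using assms by (intro sum.mono_neutral_right) auto
  finally show ?thesis .
qed

lemma nc_pair_monom_right:
  assumes "finite {u. q u \<noteq> 0}"
  shows "nc_pair (nc_mult q (nc_monom v)) g = nc_pair q (rshift v g)"
proof -
  let ?m = "nc_mult q (nc_monom v)"
  have val: "?m (u @ v) = q u" for u by (simp add: nc_mult_monom_right)
  have sub: "{x. ?m x \<noteq> 0} \<subseteq> (\<lambda>u. u @ v) ` {u. q u \<noteq> 0}"
  proof
    fix x assume "x \<in> {x. ?m x \<noteq> 0}"
    then have "length v \<le> length x" "drop (length x - length v) x = v"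
        "q (take (length x - length v) x) \<noteq> 0"
      by (auto simp: nc_mult_monom_right split: if_splits)
    then show "x \<in> (\<lambda>u. u @ v) ` {u. q u \<noteq> 0}"
      by (intro image_eqI[of _ _ "take (length x - length v) x"]) (auto, metis append_take_drop_id)
  qed
  have "nc_pair ?m g = (\<Sum>x\<in>(\<lambda>u. u @ v) ` {u. q u \<noteq> 0}. ?m x * g x)"
    unfolding nc_pair_def using assms sub by (intro sum.mono_neutral_left) auto
  also have "\<dots> = (\<Sum>u\<in>{u. q u \<noteq> 0}. ?m (u @ v) * g (u @ v))"
    by (subst sum.reindex) (auto simp: inj_on_def)
  finally show ?thesis by (simp add: val nc_pair_def rshift_def)
qed

lemma nc_pair_monom_left:
  assumes "finite {u. q u \<noteq> 0}"
  shows "nc_pair (nc_mult (nc_monom v) q) g = nc_pair q (lshift v g)"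
proof -
  let ?m = "nc_mult (nc_monom v) q"
  have val: "?m (v @ u) = q u" for u by (simp add: nc_mult_monom_left)
  have sub: "{x. ?m x \<noteq> 0} \<subseteq> (\<lambda>u. v @ u) ` {u. q u \<noteq> 0}"
  proof
    fix x assume "x \<in> {x. ?m x \<noteq> 0}"
    then have "length v \<le> length x" "take (length v) x = v" "q (drop (length v) x) \<noteq> 0"
      by (auto simp: nc_mult_monom_left split: if_splits)
    then show "x \<in> (\<lambda>u. v @ u) ` {u. q u \<noteq> 0}"
      by (intro image_eqI[of _ _ "drop (length v) x"]) (auto, metis append_take_drop_id)
  qed
  have "nc_pair ?m g = (\<Sum>x\<in>(\<lambda>u. v @ u) ` {u. q u \<noteq> 0}. ?m x * g x)"
    unfolding nc_pair_def using assms sub by (intro sum.mono_neutral_left) auto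
  also have "\<dots> = (\<Sum>u\<in>{u. q u \<noteq> 0}. ?m (v @ u) * g (v @ u))"
    by (subst sum.reindex) (auto simp: inj_on_def)
  finally show ?thesis by (simp add: val nc_pair_def lshift_def)
qed

definition fscale :: "complex \<Rightarrow> (nat list \<Rightarrow> complex) \<Rightarrow> nat list \<Rightarrow> complex" where
  "fscale c f = (\<lambda>w. c * f w)"

interpretation fspace: vector_space fscale
  by unfold_locales (auto simp: fscale_def fun_eq_iff algebra_simps)

interpretation fspace_pair: vector_space_pair fscale fscale ..

lemma sum_fun_apply: "(\<Sum>i\<in>A. f i) x = (\<Sum>i\<in>A. f i x)"
  for f :: "'i \<Rightarrow> 'a \<Rightarrow> 'b::comm_monoid_add"
  by (induction A rule: infinite_finite_induct) auto

lemma monom_expansion: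
  assumes "finite W" "\<And>w. w \<notin> W \<Longrightarrow> h w = 0"
  shows "h = (\<Sum>w\<in>W. fscale (h w) (nc_monom w))"
proof
  fix v
  have "(\<Sum>w\<in>W. fscale (h w) (nc_monom w)) v = (\<Sum>w\<in>W. if w = v then h v else 0)"
    unfolding sum_fun_apply fscale_def nc_monom_def by (intro sum.cong) auto
  also have "\<dots> = h v" using assms by (simp add: sum.delta)
  finally show "h v = (\<Sum>w\<in>W. fscale (h w) (nc_monom w)) v" by simp
qed

lemma linear_monom_expansion:
  assumes L: "Vector_Spaces.linear fscale fscale g" and "finite W" "\<And>w. w \<notin> W \<Longrightarrow> h w = 0"
  shows "g h v = (\<Sum>w\<in>W. h w * g (nc_monom w) v)"
proof -
  interpret g: Vector_Spaces.linear fscale fscale g by (fact L)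
  have "g h = g (\<Sum>w\<in>W. fscale (h w) (nc_monom w))" using monom_expansion[OF assms(2,3)] by simp
  also have "\<dots> = (\<Sum>w\<in>W. fscale (h w) (g (nc_monom w)))" by (simp add: g.sum g.scale)
  finally show ?thesis by (simp add: sum_fun_apply fscale_def)
qed

text \<open>A vector outside a subspace can be sent to any prescribed value by a linear map
  vanishing on the subspace (extend a basis of the subspace by the vector).\<close>
lemma separating_linear_map:
  assumes U: "fspace.subspace U" and p: "p \<notin> U"
  shows "\<exists>g. Vector_Spaces.linear fscale fscale g \<and> g p = c \<and> (\<forall>q\<in>U. g q = 0)"
proof -
  obtain B where B: "B \<subseteq> U" "fspace.independent B" "U \<subseteq> fspace.span B"
    using fspace.maximal_independent_subset by blast
  have "fspace.span B \<subseteq> U" using B(1) U by (rule fspace.span_minimal)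
  then have pB: "p \<notin> fspace.span B" using p by auto
  then have "fspace.independent (insert p B)" by (rule fspace.independent_insertI[OF _ B(2)])
  from fspace_pair.linear_independent_extend[OF this, of "\<lambda>x. if x = p then c else 0"]
  obtain g where g: "Vector_Spaces.linear fscale fscale g"
      "\<forall>x\<in>insert p B. g x = (if x = p then c else 0)"
    by blast
  have "g q = 0" if "q \<in> U" for q
    by (rule fspace_pair.linear_eq_0_on_span[OF g(1) _ subsetD[OF B(3) that]])
      (use g(2) pB fspace.span_base in auto)
  then show ?thesis using g by auto
qed

section \<open>Annihilators of an ideal in degree \<le> k\<close>

definition words_upto :: "nat \<Rightarrow> nat \<Rightarrow> nat list set" where
  "words_upto d k = {w. set w \<subseteq> {..<d} \<and> length w \<le> k}"

definition annihilator :: "nat \<Rightarrow> (nat list \<Rightarrow> complex) set \<Rightarrow> nat \<Rightarrow> (nat list \<Rightarrow> complex) set"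
  where "annihilator d J k =
    {g. (\<forall>w. g w \<noteq> 0 \<longrightarrow> w \<in> words_upto d k) \<and> (\<forall>q\<in>J. nc_pair q g = 0)}"

lemma finite_words_upto: "finite (words_upto d k)"
  unfolding words_upto_def by (rule finite_lists_length_le) auto

lemma nil_words_upto: "[] \<in> words_upto d k"
  unfolding words_upto_def by auto

lemma subspace_annihilator: "fspace.subspace (annihilator d J k)"
proof (rule fspace.subspaceI)
  show "0 \<in> annihilator d J k" unfolding annihilator_def zero_fun_def using nc_pair_zero by simp
  show "x + y \<in> annihilator d J k" if "x \<in> annihilator d J k" "y \<in> annihilator d J k" for x y
  proof -
    have "x + y = (\<lambda>w. x w + y w)" by (simp add: fun_eq_iff)
    moreover have "(\<lambda>w. x w + y w) \<in> annihilator d J k"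
      using that unfolding annihilator_def by (auto simp: nc_pair_add) (metis add.left_neutral)
    ultimately show ?thesis by simp
  qed
  show "fscale c x \<in> annihilator d J k" if "x \<in> annihilator d J k" for c x
    using that unfolding annihilator_def fscale_def by (auto simp: nc_pair_scale)
qed

text \<open>Right shifts preserve the annihilator of an ideal, since <q, rshift u g> = <q x^u, g>.\<close>
lemma annihilator_rshift:
  assumes J: "nc_ideal d J" and g: "g \<in> annihilator d J k" and u: "set u \<subseteq> {..<d}"
  shows "rshift u g \<in> annihilator d J k"
  unfolding annihilator_def
proof (intro CollectI conjI allI impI ballI)
  show "w \<in> words_upto d k" if "rshift u g w \<noteq> 0" for w
  proof -
    have "w @ u \<in> words_upto d k" using that g unfolding rshift_def annihilator_def by auto
    then show ?thesis unfolding words_upto_def by auto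
  qed
  show "nc_pair q (rshift u g) = 0" if q: "q \<in> J" for q
  proof -
    have "nc_pair q (rshift u g) = nc_pair (nc_mult q (nc_monom u)) g"
      using nc_pair_monom_right nc_poly_support(1)[OF ideal_poly[OF J q]] by simp
    also have "\<dots> = 0" using g ideal_monom_right[OF J q u] unfolding annihilator_def by auto
    finally show ?thesis .
  qed
qed

lemma annihilator_projection:
  "\<exists>P. Vector_Spaces.linear fscale fscale P \<and> (\<forall>g\<in>annihilator d J k. P g = g)
     \<and> (\<forall>x. P x \<in> annihilator d J k)"
proof -
  obtain BV where BV: "BV \<subseteq> annihilator d J k" "fspace.independent BV"
      "annihilator d J k \<subseteq> fspace.span BV"
    using fspace.maximal_independent_subset by blast
  define C where "C = fspace.extend_basis BV"
  have C: "BV \<subseteq> C" "fspace.independent C" "fspace.span C = UNIV"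
    unfolding C_def using BV(2) fspace.extend_basis_superset fspace.independent_extend_basis
      fspace.span_extend_basis by auto
  obtain P where P: "Vector_Spaces.linear fscale fscale P" "\<forall>x\<in>C. P x = (if x \<in> BV then x else 0)"
    using fspace_pair.linear_independent_extend[OF C(2), of "\<lambda>x. if x \<in> BV then x else 0"] by blast
  have "P g = g" if "g \<in> annihilator d J k" for g
  proof -
    have "P g = id g"
      by (rule fspace_pair.linear_eq_on_span[OF P(1) fspace.linear_id _ subsetD[OF BV(3) that]])
        (use P(2) C(1) in auto)
    then show ?thesis by simp
  qed
  moreover have "P x \<in> annihilator d J k" for x
  proof -
    have "P ` C \<subseteq> annihilator d J k"
      using P(2) BV(1) fspace.subspace_0[OF subspace_annihilator] by auto
    then have "fspace.span (P ` C) \<subseteq> annihilator d J k"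
      by (rule fspace.span_minimal[OF _ subspace_annihilator])
    moreover have "P x \<in> P ` fspace.span C" using C(3) by auto
    ultimately show ?thesis using fspace_pair.linear_span_image[OF P(1), of C] by auto
  qed
  ultimately show ?thesis using P(1) by blast
qed

definition low_part :: "nat \<Rightarrow> (nat list \<Rightarrow> complex) set \<Rightarrow> nat \<Rightarrow> (nat list \<Rightarrow> complex) set"
  where "low_part d J k = {q \<in> J. \<forall>w. q w \<noteq> 0 \<longrightarrow> w \<in> words_upto d k}"

lemma subspace_low_part:
  assumes J: "nc_ideal d J"
  shows "fspace.subspace (low_part d J k)"
proof (rule fspace.subspaceI)
  show "0 \<in> low_part d J k" unfolding low_part_def zero_fun_def using ideal_zero[OF J] by simp
  show "x + y \<in> low_part d J k" if "x \<in> low_part d J k" "y \<in> low_part d J k" for x y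
  proof -
    have "x + y = (\<lambda>w. x w + y w)" by (simp add: fun_eq_iff)
    moreover have "(\<lambda>w. x w + y w) \<in> low_part d J k"
      using that ideal_add[OF J] unfolding low_part_def by auto (metis add.left_neutral)
    ultimately show ?thesis by simp
  qed
  show "fscale c x \<in> low_part d J k" if "x \<in> low_part d J k" for c x
    using that ideal_scale[OF J] unfolding low_part_def fscale_def by auto
qed

lemma nc_pair_trunc:
  assumes q: "finite {u. q u \<noteq> 0}" and g: "\<And>w. w \<notin> words_upto d k \<Longrightarrow> g w = 0"
  shows "nc_pair q g = nc_pair (nc_trunc k q) g"
proof -
  have t: "finite {u. nc_trunc k q u \<noteq> 0}"
    using q unfolding nc_trunc_def by (auto intro: finite_subset[of _ "{u. q u \<noteq> 0}"])
  have "nc_pair q g = (\<Sum>w\<in>words_upto d k. q w * g w)"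
    by (rule nc_pair_eq_sum[OF q finite_words_upto g])
  also have "\<dots> = (\<Sum>w\<in>words_upto d k. nc_trunc k q w * g w)"
    by (intro sum.cong refl) (auto simp: nc_trunc_def words_upto_def)
  also have "\<dots> = nc_pair (nc_trunc k q) g"
    by (rule nc_pair_eq_sum[OF t finite_words_upto g, symmetric])
  finally show ?thesis .
qed

lemma hom_ideal_trunc_low_part:
  assumes H: "nc_hom_ideal d J" and q: "q \<in> J"
  shows "nc_trunc k q \<in> low_part d J k"
proof -
  have "q \<in> nc_poly d" using H q unfolding nc_hom_ideal_def nc_ideal_def by blast
  then show ?thesis
    using hom_ideal_trunc[OF H q] unfolding low_part_def nc_trunc_def nc_poly_def words_upto_def
    by (auto split: if_splits)
qed

definition read_off :: "nat \<Rightarrow> nat \<Rightarrow> ((nat list \<Rightarrow> complex) \<Rightarrow> nat list \<Rightarrow> complex)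
    \<Rightarrow> nat list \<Rightarrow> complex" where
  "read_off d k g = (\<lambda>w. if w \<in> words_upto d k then g (nc_monom w) [] else 0)"

lemma nc_pair_read_off:
  assumes g: "Vector_Spaces.linear fscale fscale g"
    and q: "finite {u. q u \<noteq> 0}" "\<And>w. q w \<noteq> 0 \<Longrightarrow> w \<in> words_upto d k"
  shows "nc_pair q (read_off d k g) = g q []"
proof -
  have "nc_pair q (read_off d k g) = (\<Sum>w\<in>words_upto d k. q w * read_off d k g w)"
    by (rule nc_pair_eq_sum[OF q(1) finite_words_upto]) (simp add: read_off_def)
  also have "\<dots> = (\<Sum>w\<in>words_upto d k. q w * g (nc_monom w) [])"
    unfolding read_off_def by simp
  also have "\<dots> = g q []"
    by (rule linear_monom_expansion[OF g finite_words_upto, symmetric]) (use q(2) in blast)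
  finally show ?thesis .
qed

text \<open>The low part of J is a subspace missing p; a linear
  map killing it and sending p to 1 is read off on monomials.\<close>
lemma separating_functional:
  assumes H: "nc_hom_ideal d J" and pP: "p \<in> nc_poly d" and pJ: "p \<notin> J"
    and pk: "\<And>w. p w \<noteq> 0 \<Longrightarrow> length w \<le> k"
  shows "\<exists>f0\<in>annihilator d J k. nc_pair p f0 = 1"
proof -
  have J: "nc_ideal d J" using H unfolding nc_hom_ideal_def by blast
  have "p \<notin> low_part d J k" using pJ unfolding low_part_def by blast
  then obtain g where g: "Vector_Spaces.linear fscale fscale g" "g p = nc_const 1"
      "\<And>q. q \<in> low_part d J k \<Longrightarrow> g q = 0"
    using separating_linear_map[OF subspace_low_part[OF J]] by blast
  let ?f0 = "read_off d k g"
  have supp: "\<And>w. w \<notin> words_upto d k \<Longrightarrow> ?f0 w = 0" by (simp add: read_off_def)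
  have "nc_pair p ?f0 = 1"
    using nc_pair_read_off[OF g(1)] pP pk g(2) unfolding nc_poly_def words_upto_def
    by (simp add: nc_const_def)
  moreover have "nc_pair q ?f0 = 0" if q: "q \<in> J" for q
  proof -
    have t: "nc_trunc k q \<in> low_part d J k" by (rule hom_ideal_trunc_low_part[OF H q])
    then have "finite {u. nc_trunc k q u \<noteq> 0}"
      unfolding low_part_def using ideal_poly[OF J] nc_poly_support(1) by blast
    then have "nc_pair (nc_trunc k q) ?f0 = g (nc_trunc k q) []"
      using t nc_pair_read_off[OF g(1)] unfolding low_part_def by blast
    then show ?thesis
      using nc_pair_trunc[OF nc_poly_support(1)[OF ideal_poly[OF J q]] supp] g(3)[OF t] by simp
  qed
  ultimately show ?thesis using supp unfolding annihilator_def by blast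
qed

section \<open>Finite-rank operators on l^2\<close>

lemma l2_finite_support: "finite S \<Longrightarrow> (\<And>n. n \<notin> S \<Longrightarrow> x n = 0) \<Longrightarrow> x \<in> l2"
  unfolding l2_def by (auto intro: summable_finite[of S])

lemma l2_zero: "(\<lambda>n. 0) \<in> l2"
  by (rule l2_finite_support[of "{}"]) auto

lemma l2_add:
  assumes "x \<in> l2" "y \<in> l2"
  shows "(\<lambda>n. x n + y n) \<in> l2"
proof -
  have le: "(cmod (x n + y n))\<^sup>2 \<le> 2 * (cmod (x n))\<^sup>2 + 2 * (cmod (y n))\<^sup>2" for n
  proof -
    have "(cmod (x n + y n))\<^sup>2 \<le> (cmod (x n) + cmod (y n))\<^sup>2"
      by (intro power_mono norm_triangle_ineq) auto
    also have "\<dots> \<le> 2 * (cmod (x n))\<^sup>2 + 2 * (cmod (y n))\<^sup>2"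
      using zero_le_power2[of "cmod (x n) - cmod (y n)"] unfolding power2_sum power2_diff
      by linarith
    finally show ?thesis .
  qed
  have "summable (\<lambda>n. 2 * (cmod (x n))\<^sup>2 + 2 * (cmod (y n))\<^sup>2)"
    using assms unfolding l2_def by (intro summable_add summable_mult) auto
  then have "summable (\<lambda>n. (cmod (x n + y n))\<^sup>2)"
    by (rule summable_comparison_test') (use le in simp)
  then show ?thesis unfolding l2_def by simp
qed

lemma l2_scale: "x \<in> l2 \<Longrightarrow> (\<lambda>n. c * x n) \<in> l2"
  unfolding l2_def by (simp add: norm_mult power_mult_distrib summable_mult)

lemma l2norm_nonneg: "x \<in> l2 \<Longrightarrow> 0 \<le> l2norm x"
  unfolding l2norm_def l2_def by (simp add: suminf_nonneg)

lemma l2_coord_le_norm: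
  assumes "x \<in> l2"
  shows "cmod (x m) \<le> l2norm x"
proof -
  have "(cmod (x m))\<^sup>2 \<le> (\<Sum>n. (cmod (x n))\<^sup>2)"
    using assms sum_le_suminf[of "\<lambda>n. (cmod (x n))\<^sup>2" "{m}"] unfolding l2_def by auto
  then have "sqrt ((cmod (x m))\<^sup>2) \<le> l2norm x" unfolding l2norm_def by (rule real_sqrt_le_mono)
  then show ?thesis by simp
qed

lemma l2norm_finite_support:
  "finite S \<Longrightarrow> (\<And>n. n \<notin> S \<Longrightarrow> x n = 0) \<Longrightarrow> l2norm x = sqrt (\<Sum>n\<in>S. (cmod (x n))\<^sup>2)"
  unfolding l2norm_def by (subst suminf_finite[of S]) auto

text \<open>The norm estimate for x \<mapsto> \<Sum>j x(a j) Y j: every coordinate is at most K ||x||.\<close>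
lemma finite_rank_norm_bound:
  fixes Y :: "'j \<Rightarrow> nat \<Rightarrow> complex"
  assumes F: "finite F" and S: "finite S" and Y: "\<And>j n. j \<in> F \<Longrightarrow> n \<notin> S \<Longrightarrow> Y j n = 0"
    and x: "x \<in> l2"
  shows "l2norm (\<lambda>n. \<Sum>j\<in>F. x (a j) * Y j n)
           \<le> sqrt (card S) * (\<Sum>j\<in>F. \<Sum>n\<in>S. cmod (Y j n)) * l2norm x"
proof -
  define K where "K = (\<Sum>j\<in>F. \<Sum>n\<in>S. cmod (Y j n))"
  let ?L = "l2norm x"
  have coord: "cmod (\<Sum>j\<in>F. x (a j) * Y j n) \<le> ?L * K" for n
  proof -
    have "cmod (Y j n) \<le> (\<Sum>n\<in>S. cmod (Y j n))" if "j \<in> F" for j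
      using S Y[OF that] by (cases "n \<in> S") (auto intro: member_le_sum simp: sum_nonneg)
    then have K: "(\<Sum>j\<in>F. cmod (Y j n)) \<le> K" unfolding K_def by (rule sum_mono)
    have "cmod (\<Sum>j\<in>F. x (a j) * Y j n) \<le> (\<Sum>j\<in>F. cmod (x (a j)) * cmod (Y j n))"
      by (simp add: norm_mult[symmetric]) (rule norm_sum)
    also have "\<dots> \<le> (\<Sum>j\<in>F. ?L * cmod (Y j n))"
      by (intro sum_mono mult_right_mono l2_coord_le_norm[OF x]) auto
    also have "\<dots> \<le> ?L * K"
      using K l2norm_nonneg[OF x] by (simp add: sum_distrib_left[symmetric] mult_left_mono)
    finally show ?thesis .
  qed
  have "l2norm (\<lambda>n. \<Sum>j\<in>F. x (a j) * Y j n) = sqrt (\<Sum>n\<in>S. (cmod (\<Sum>j\<in>F. x (a j) * Y j n))\<^sup>2)"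
    using Y by (intro l2norm_finite_support[OF S]) auto
  also have "\<dots> \<le> sqrt (\<Sum>n\<in>S. (?L * K)\<^sup>2)"
    by (intro real_sqrt_le_mono sum_mono power_mono coord) auto
  also have "\<dots> = sqrt (card S) * (?L * K)"
    using l2norm_nonneg[OF x] by (simp add: real_sqrt_mult K_def sum_nonneg)
  finally show ?thesis by (simp add: K_def algebra_simps)
qed

lemma finite_rank_bop:
  fixes Y :: "'j \<Rightarrow> nat \<Rightarrow> complex"
  assumes F: "finite F" and S: "finite S" and Y: "\<And>j n. j \<in> F \<Longrightarrow> n \<notin> S \<Longrightarrow> Y j n = 0"
  shows "(\<lambda>x. if x \<in> l2 then (\<lambda>n. \<Sum>j\<in>F. x (a j) * Y j n) else (\<lambda>n. 0)) \<in> bop"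
    (is "?T \<in> bop")
  unfolding bop_def
proof (intro CollectI conjI ballI allI impI)
  show "?T x \<in> l2" if "x \<in> l2" for x
    using that Y by (intro l2_finite_support[OF S]) auto
  show "?T (\<lambda>n. x n + y n) = (\<lambda>n. ?T x n + ?T y n)" if "x \<in> l2" "y \<in> l2" for x y
    using that l2_add[OF that] by (simp add: distrib_right sum.distrib)
  show "?T (\<lambda>n. c * x n) = (\<lambda>n. c * ?T x n)" if "x \<in> l2" for x c
    using that l2_scale[OF that] by (simp add: sum_distrib_left mult.assoc)
  show "\<exists>C. \<forall>x\<in>l2. l2norm (?T x) \<le> C * l2norm x"
  proof (intro exI ballI)
    fix x assume x: "x \<in> l2"
    show "l2norm (?T x) \<le> (sqrt (card S) * (\<Sum>j\<in>F. \<Sum>n\<in>S. cmod (Y j n))) * l2norm x"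
      using finite_rank_norm_bound[OF F S Y x] x by simp
  qed
  show "?T x = (\<lambda>n. 0)" if "x \<notin> l2" for x using that by simp
qed

lemma bop_zero_arg:
  assumes "T \<in> bop"
  shows "T (\<lambda>n. 0) = (\<lambda>n. 0)"
proof -
  have "\<forall>x\<in>l2. \<forall>c. T (\<lambda>n. c * x n) = (\<lambda>n. c * T x n)"
    using assms unfolding bop_def by blast
  from this[rule_format, OF l2_zero, of 0] show ?thesis by simp
qed

lemma bop_idH:
  assumes T: "T \<in> bop"
  shows "T (idH x) = T x"
proof (cases "x \<in> l2")
  case False
  then have "T x = (\<lambda>n. 0)" using T unfolding bop_def by blast
  then show ?thesis using False bop_zero_arg[OF T] by (simp add: idH_def)
qed (simp add: idH_def)

section \<open>The model tuple of operators\<close>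

text \<open>The finitely many words of length \<le> k are coded by natural numbers, identifying
  functions on them with finitely supported vectors in l^2.\<close>
definition to_l2 :: "nat \<Rightarrow> nat \<Rightarrow> (nat list \<Rightarrow> complex) \<Rightarrow> nat \<Rightarrow> complex" where
  "to_l2 d k h = (\<lambda>n. if n \<in> to_nat ` words_upto d k then h (from_nat n) else 0)"

definition from_l2 :: "nat \<Rightarrow> nat \<Rightarrow> (nat \<Rightarrow> complex) \<Rightarrow> nat list \<Rightarrow> complex" where
  "from_l2 d k x = (\<lambda>w. if w \<in> words_upto d k then x (to_nat w) else 0)"

lemma to_l2_in_l2: "to_l2 d k h \<in> l2"
  by (rule l2_finite_support[of "to_nat ` words_upto d k"]) (auto simp: to_l2_def finite_words_upto)

lemma to_l2_at: "w \<in> words_upto d k \<Longrightarrow> to_l2 d k h (to_nat w) = h w"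
  unfolding to_l2_def by auto

lemma from_to_l2:
  assumes "\<And>w. h w \<noteq> 0 \<Longrightarrow> w \<in> words_upto d k"
  shows "from_l2 d k (to_l2 d k h) = h"
  using assms unfolding from_l2_def to_l2_def by (auto simp: fun_eq_iff)

definition model_op :: "nat \<Rightarrow> nat \<Rightarrow> ((nat list \<Rightarrow> complex) \<Rightarrow> nat list \<Rightarrow> complex) \<Rightarrow> nat
    \<Rightarrow> (nat \<Rightarrow> complex) \<Rightarrow> nat \<Rightarrow> complex" where
  "model_op d k P a = (\<lambda>x. if x \<in> l2 then to_l2 d k (rshift [a] (P (from_l2 d k x))) else (\<lambda>n. 0))"

definition model_tuple :: "nat \<Rightarrow> nat \<Rightarrow> ((nat list \<Rightarrow> complex) \<Rightarrow> nat list \<Rightarrow> complex)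
    \<Rightarrow> ((nat \<Rightarrow> complex) \<Rightarrow> nat \<Rightarrow> complex) list" where
  "model_tuple d k P = map (model_op d k P) [0..<d]"

text \<open>For linear P, the model operator is of finite rank, hence bounded.\<close>
lemma model_op_bop:
  assumes Plin: "Vector_Spaces.linear fscale fscale P"
  shows "model_op d k P a \<in> bop"
proof -
  let ?W = "words_upto d k"
  let ?Y = "\<lambda>w. to_l2 d k (rshift [a] (P (nc_monom w)))"
  have "model_op d k P a x = (\<lambda>n. \<Sum>w\<in>?W. x (to_nat w) * ?Y w n)" if x: "x \<in> l2" for x
  proof
    fix n
    have "P (from_l2 d k x) v = (\<Sum>w\<in>?W. x (to_nat w) * P (nc_monom w) v)" for v
      by (subst linear_monom_expansion[OF Plin finite_words_upto]) (auto simp: from_l2_def)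
    then show "model_op d k P a x n = (\<Sum>w\<in>?W. x (to_nat w) * ?Y w n)"
      using x unfolding model_op_def to_l2_def rshift_def by simp
  qed
  then have "model_op d k P a = (\<lambda>x. if x \<in> l2 then (\<lambda>n. \<Sum>w\<in>?W. x (to_nat w) * ?Y w n) else (\<lambda>n. 0))"
    by (auto simp: fun_eq_iff model_op_def)
  also have "\<dots> \<in> bop"
    by (rule finite_rank_bop[OF finite_words_upto finite_imageI[OF finite_words_upto]])
      (auto simp: to_l2_def)
  finally show ?thesis .
qed

context
  fixes d J k P
  assumes J: "nc_ideal d J"
    and Plin: "Vector_Spaces.linear fscale fscale P"
    and Pid: "\<And>g. g \<in> annihilator d J k \<Longrightarrow> P g = g"
    and Prange: "\<And>x. P x \<in> annihilator d J k"
begin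

lemma model_op_to_l2:
  "g \<in> annihilator d J k \<Longrightarrow> model_op d k P a (to_l2 d k g) = to_l2 d k (rshift [a] g)"
  using Pid from_to_l2[of g d k] to_l2_in_l2 unfolding model_op_def annihilator_def by auto

lemma opword_model_tuple:
  assumes x: "x \<in> l2"
  shows "set u \<subseteq> {..<d} \<Longrightarrow> u \<noteq> [] \<Longrightarrow>
    opword (model_tuple d k P) u x = to_l2 d k (rshift u (P (from_l2 d k x)))"
proof (induction u)
  case Nil then show ?case by simp
next
  case (Cons a u)
  have a: "model_tuple d k P ! a = model_op d k P a"
    using Cons.prems unfolding model_tuple_def by auto
  show ?case
  proof (cases "u = []")
    case True
    then show ?thesis using x a by (simp add: idH_def model_op_def)
  next
    case False
    then have "rshift u (P (from_l2 d k x)) \<in> annihilator d J k"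
      using Cons.prems annihilator_rshift[OF J Prange] by auto
    then show ?thesis using Cons False a by (simp add: model_op_to_l2 rshift_rshift)
  qed
qed

lemma opword_model_tuple_outside:
  assumes "x \<notin> l2"
  shows "set u \<subseteq> {..<d} \<Longrightarrow> opword (model_tuple d k P) u x = (\<lambda>n. 0)"
proof (induction u)
  case Nil then show ?case using assms by (simp add: idH_def)
next
  case (Cons a u)
  then show ?case using bop_zero_arg[OF model_op_bop[OF Plin]] by (simp add: model_tuple_def)
qed

lemma model_eval_coord:
  assumes x: "x \<in> l2" and q: "q \<in> nc_poly d" and w: "w \<in> words_upto d k"
    and const: "q [] = 0 \<or> x \<in> to_l2 d k ` annihilator d J k"
  shows "nc_eval q (model_tuple d k P) x (to_nat w) = nc_pair q (lshift w (P (from_l2 d k x)))"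
  unfolding nc_eval_def nc_pair_def
proof (intro sum.cong refl)
  fix u assume u: "u \<in> {u. q u \<noteq> 0}"
  show "q u * opword (model_tuple d k P) u x (to_nat w) = q u * lshift w (P (from_l2 d k x)) u"
  proof (cases "u = []")
    case True
    with u const obtain g where g: "g \<in> annihilator d J k" "x = to_l2 d k g" by auto
    then have "P (from_l2 d k x) = g" using Pid from_to_l2 unfolding annihilator_def by auto
    then show ?thesis using True g(2) x w by (simp add: idH_def to_l2_at lshift_def)
  next
    case False
    then show ?thesis using opword_model_tuple[OF x] nc_poly_support(2)[OF q] u w
      by (simp add: to_l2_at rshift_def lshift_def)
  qed
qed

lemma model_tuple_in_Zset:
  assumes const_free: "\<And>q. q \<in> J \<Longrightarrow> q [] = 0"
  shows "model_tuple d k P \<in> Zset d J"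
  unfolding Zset_def
proof (intro CollectI conjI ballI)
  show "length (model_tuple d k P) = d" unfolding model_tuple_def by simp
  show "set (model_tuple d k P) \<subseteq> bop" unfolding model_tuple_def using model_op_bop[OF Plin] by auto
  show "nc_eval q (model_tuple d k P) = zeroH" if q: "q \<in> J" for q
  proof -
    note qP = ideal_poly[OF J q] and qsupp = nc_poly_support[OF ideal_poly[OF J q]]
    have "nc_eval q (model_tuple d k P) x n = 0" for x n
    proof (cases "x \<in> l2 \<and> n \<in> to_nat ` words_upto d k")
      case True
      then obtain w where w: "w \<in> words_upto d k" "n = to_nat w" by auto
      let ?G = "P (from_l2 d k x)"
      have "nc_eval q (model_tuple d k P) x n = nc_pair q (lshift w ?G)"
        using model_eval_coord True qP w const_free[OF q] by simp
      also have "\<dots> = nc_pair (nc_mult (nc_monom w) q) ?G"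
        by (rule nc_pair_monom_left[OF qsupp(1), symmetric])
      also have "\<dots> = 0"
        using Prange[of "from_l2 d k x"] ideal_monom_left[OF J q] w(1)
        unfolding annihilator_def words_upto_def by auto
      finally show ?thesis .
    next
      case False
      have "opword (model_tuple d k P) u x n = 0" if u: "q u \<noteq> 0" for u
      proof -
        have "u \<noteq> []" "set u \<subseteq> {..<d}" using u const_free[OF q] qsupp(2) by auto
        then show ?thesis
          using False opword_model_tuple[of x u] opword_model_tuple_outside[of x u]
          by (cases "x \<in> l2") (auto simp: to_l2_def)
      qed
      then show ?thesis unfolding nc_eval_def by simp
    qed
    then show ?thesis unfolding zeroH_def by (simp add: fun_eq_iff)
  qed
qed

text \<open>A functional f0 in the annihilator with <p, f0> = 1 witnesses p(T) \<noteq> 0: the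
  coordinate [] of p(T) applied to f0 is <p, f0>.\<close>
lemma model_tuple_detects:
  assumes p: "p \<in> nc_poly d" and f0: "f0 \<in> annihilator d J k" and pf0: "nc_pair p f0 = 1"
  shows "nc_eval p (model_tuple d k P) \<noteq> zeroH"
proof
  assume zero: "nc_eval p (model_tuple d k P) = zeroH"
  let ?x = "to_l2 d k f0"
  have "P (from_l2 d k ?x) = f0" using f0 Pid from_to_l2 unfolding annihilator_def by auto
  then have "nc_eval p (model_tuple d k P) ?x (to_nat ([]::nat list)) = nc_pair p f0"
    using model_eval_coord[OF to_l2_in_l2 p nil_words_upto] f0 by (simp add: lshift_def)
  then show False using zero pf0 by (simp add: zeroH_def)
qed

end

theorem hom_nullstellensatz:
  assumes H: "nc_hom_ideal d J"
  shows "Iset d (Zset d J) = J"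
proof
  have J: "nc_ideal d J" using H unfolding nc_hom_ideal_def by blast
  show "J \<subseteq> Iset d (Zset d J)"
    unfolding Iset_def Zset_def using ideal_poly[OF J] by auto
  show "Iset d (Zset d J) \<subseteq> J"
  proof (rule ccontr)
    assume "\<not> Iset d (Zset d J) \<subseteq> J"
    then obtain p where p: "p \<in> Iset d (Zset d J)" "p \<notin> J" by blast
    have pP: "p \<in> nc_poly d" using p unfolding Iset_def by auto
    then have "finite (length ` {w. p w \<noteq> 0})" unfolding nc_poly_def by auto
    then obtain k where k: "\<And>w. p w \<noteq> 0 \<Longrightarrow> length w \<le> k"
      unfolding finite_nat_set_iff_bounded_le by blast
    obtain f0 where f0: "f0 \<in> annihilator d J k" "nc_pair p f0 = 1"
      using separating_functional[OF H pP p(2) k] by blast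
    obtain P where P: "Vector_Spaces.linear fscale fscale P"
        "\<forall>g\<in>annihilator d J k. P g = g" "\<forall>x. P x \<in> annihilator d J k"
      using annihilator_projection by blast
    have "q [] = 0" if "q \<in> J" for q
      using proper_ideal_const_free[OF J pP p(2) hom_ideal_graded[OF H that]] .
    then have "model_tuple d k P \<in> Zset d J"
      using model_tuple_in_Zset[OF J P(1)] P(2,3) by blast
    moreover have "nc_eval p (model_tuple d k P) \<noteq> zeroH"
      using model_tuple_detects[OF J P(1) _ _ pP f0] P(2,3) by blast
    ultimately show False using p(1) unfolding Iset_def by auto
  qed
qed

lemma zeroH_bop: "zeroH \<in> bop"
proof -
  have "zeroH = (\<lambda>x. if x \<in> l2 then (\<lambda>n. \<Sum>j\<in>{}. x j * 0) else (\<lambda>n. 0))"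
    unfolding zeroH_def by (simp add: fun_eq_iff)
  also have "\<dots> \<in> bop" by (rule finite_rank_bop[of "{}" "{}"]) auto
  finally show ?thesis .
qed

lemma nc_eval_zero_tuple:
  assumes q: "q \<in> nc_poly d"
  shows "nc_eval q (replicate d zeroH) x n = q [] * idH x n"
proof -
  note qsupp = nc_poly_support[OF q]
  have "opword (replicate d zeroH) u x = (\<lambda>n. 0)" if "u \<noteq> []" "set u \<subseteq> {..<d}" for u
    using that by (cases u) (auto simp: zeroH_def)
  then have "nc_eval q (replicate d zeroH) x n =
      (\<Sum>u\<in>{u. q u \<noteq> 0}. if u = [] then q [] * idH x n else 0)"
    unfolding nc_eval_def using qsupp(2) by (intro sum.cong) auto
  also have "\<dots> = q [] * idH x n"
    using qsupp(1) by (cases "q [] = 0") (auto simp: sum.delta')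
  finally show ?thesis .
qed

definition const_free :: "nat \<Rightarrow> (nat list \<Rightarrow> complex) set" where
  "const_free d = {q \<in> nc_poly d. q [] = 0}"

lemma Iset_zero_tuple: "Iset d {replicate d zeroH} = const_free d"
proof -
  have "nc_eval q (replicate d zeroH) = zeroH \<longleftrightarrow> q [] = 0" if q: "q \<in> nc_poly d" for q
  proof
    assume "nc_eval q (replicate d zeroH) = zeroH"
    then have "nc_eval q (replicate d zeroH) (to_l2 d 0 (nc_const 1)) (to_nat ([]::nat list)) = 0"
      by (simp add: zeroH_def)
    then show "q [] = 0"
      using nc_eval_zero_tuple[OF q] to_l2_in_l2 to_l2_at[OF nil_words_upto]
      by (simp add: idH_def nc_const_def)
  next
    assume "q [] = 0"
    then have "nc_eval q (replicate d zeroH) x n = zeroH x n" for x n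
      by (simp add: nc_eval_zero_tuple[OF q]) (simp add: zeroH_def)
    then show "nc_eval q (replicate d zeroH) = zeroH" by blast
  qed
  then show ?thesis unfolding Iset_def const_free_def by auto
qed

lemma const_free_ideal: "nc_ideal d (const_free d)"
  by (rule nc_idealI) (auto simp: const_free_def nc_poly_zero nc_poly_add nc_poly_mult nc_mult_nil)

lemma nc_vars_poly: "nc_var ` {..<d} \<subseteq> nc_poly d"
  using nc_poly_monom[of "[_]"] by (auto simp: nc_var_def nc_monom_def)

lemma nc_var_ideal_hom: "nc_hom_ideal d (nc_gen_ideal d (nc_var ` {..<d}))"
  unfolding nc_hom_ideal_def
proof (intro conjI exI)
  show "nc_ideal d (nc_gen_ideal d (nc_var ` {..<d}))" by (rule nc_gen_ideal_props(1)[OF nc_vars_poly])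
  show "\<forall>s\<in>nc_var ` {..<d}. nc_homogeneous s"
    unfolding nc_homogeneous_def nc_var_def by (auto intro: exI[of _ 1])
qed (use nc_vars_poly in simp_all)

lemma Zset_nc_var_ideal: "Zset d (nc_gen_ideal d (nc_var ` {..<d})) = {replicate d zeroH}"
proof
  let ?X = "nc_gen_ideal d (nc_var ` {..<d})"
  have "?X \<subseteq> const_free d"
    by (rule nc_gen_ideal_least[OF const_free_ideal])
      (use nc_vars_poly in \<open>auto simp: const_free_def nc_var_def\<close>)
  then show "{replicate d zeroH} \<subseteq> Zset d ?X"
    using zeroH_bop Iset_zero_tuple unfolding Zset_def Iset_def by auto
  show "Zset d ?X \<subseteq> {replicate d zeroH}"
  proof
    fix T assume T: "T \<in> Zset d ?X"
    have len: "length T = d" and Tb: "set T \<subseteq> bop" using T unfolding Zset_def by auto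
    have "T ! a = zeroH" if a: "a < d" for a
    proof -
      have "nc_var a \<in> ?X" using nc_gen_ideal_props(2)[OF nc_vars_poly] a by auto
      then have "nc_eval (nc_var a) T = zeroH" using T unfolding Zset_def by auto
      moreover have "nc_eval (nc_var a) T = (\<lambda>x. (T ! a) (idH x))"
        unfolding nc_eval_def nc_var_def by (simp add: fun_eq_iff)
      moreover have "T ! a \<in> bop" using Tb a len by auto
      ultimately show ?thesis using bop_idH by (auto simp: fun_eq_iff)
    qed
    then show "T \<in> {replicate d zeroH}" using len by (auto intro: nth_equalityI)
  qed
qed

theorem mainTheorem14:
  fixes d :: nat and J :: "(nat list \<Rightarrow> complex) set"
  assumes "nc_hom_ideal d J"
  shows "Iset d (Zset d J) = J \<and>
         (Zset d J = {replicate d zeroH} \<longleftrightarrow> J = nc_gen_ideal d (nc_var ` {..<d}))"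
proof
  show nss: "Iset d (Zset d J) = J" by (rule hom_nullstellensatz[OF assms])
  let ?X = "nc_gen_ideal d (nc_var ` {..<d})"
  have X: "?X = const_free d"
    using hom_nullstellensatz[OF nc_var_ideal_hom] Zset_nc_var_ideal Iset_zero_tuple by simp
  show "Zset d J = {replicate d zeroH} \<longleftrightarrow> J = ?X"
  proof
    assume Z: "Zset d J = {replicate d zeroH}"
    have "J = Iset d (Zset d J)" using nss ..
    also have "\<dots> = const_free d" using Z Iset_zero_tuple by simp
    finally show "J = ?X" using X by simp
  next
    assume "J = ?X"
    then show "Zset d J = {replicate d zeroH}" using Zset_nc_var_ideal by simp
  qed
qed

end
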